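(* Let $\mathcal{M}$ be an MRTA instance with robot-task graph $G=(R,T;E;c)$ such that $c$ is metric and injective on $E$. Then (1) $\textsc{Assign}(\mathcal{M})$ provides a 2-approximation for $\textsc{MinSum}(\mathcal{M})$, i.e. $C(\textsc{Assign}(\mathcal{M}))\le2\,C(\textsc{MinSum}(\mathcal{M}))$; and (2) $\textsc{Assign}(\mathcal{M})$ is robust over the interval family $\{(-\underline{\Delta}(e),\overline{\Delta}(e)]:e\in E\}$ output by $\textsc{AuctionSensitivity}(\mathcal{M},W,a)$, where $(W,a)=\textsc{Auction}(\mathcal{M})$: that is, for every edge cost function $c'$ on $E$ with $c'(e)\in(c(e)-\underline{\Delta}(e),c(e)+\overline{\Delta}(e)]$ for all $e\in E$, $\textsc{Auction}$ run with costs $c'$ produces the same list of winning edges $W$, and hence $\textsc{Assign}$ outputs the same plan.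
   Context: $R$ (robots) and $T$ (tasks) are finite disjoint sets with $R\neq\emptyset$, $|R\sqcup T|\ge3$. A metric cost $c$ on $R\sqcup T$ satisfies $c(x,y)\ge0$, $c(x,y)=0$ iff $x=y$, symmetry and the triangle inequality. The robot-task graph has vertex set $R\sqcup T$, edge set $E$ of all 2-element subsets, with edge costs $c(\{x,y\})=c(x,y)$; injective means distinct edges have distinct costs. The cost of a list $P=(v_0,\dots,v_n)$ is $C(P)=\sum_{i=0}^{n-1}c(v_i,v_{i+1})$. A robot-route is such a list with $v_0\in R$ and $v_j\in T$ for $j\ge1$; a plan is a family of $|R|$ robot-routes whose vertex sets partition $R\sqcup T$, with cost the sum of route costs; $\textsc{MinSum}(\mathcal{M})$ is a minimum-cost plan. $\textsc{Auction}$: set $A=\emptyset$, $a(r)=0$ for $r\in R$. For $k=1,\dots,|T|$: let $w_k=\{s,t\}$ be the edge with $s\in R\cup A$, $t\in T\setminus A$ minimising its cost; set $a(t)=k$, $A\leftarrow A\cup\{t\}$. Output $W=(w_1,\dots,w_{|T|})$ and $a$. $\textsc{DFShortcut}$: the edges of $W$ form a forest each of whose components contains exactly one robot. For each robot $r$ with component vertex set $V(r)$, start with $P(r)=(r)$ and, while $P(r)$ does not contain all of $V(r)$, scan $P(r)$ from last to first, and at the first vertex $t$ having a $W$-neighbour not in $P(r)$, append the such neighbour $s$ with smallest $a(s)$. Output $\{P(r):r\in R\}$. $\textsc{Assign}(\mathcal{M})=\textsc{DFShortcut}(\textsc{Auction}(\mathcal{M}))$. For $e=\{x,y\}$, $B_e=\{k\in\mathbb{Z}:\min(a(x),a(y))<k\le\max(a(x),a(y))\}$.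 $\textsc{AuctionSensitivity}(\mathcal{M},W,a)$ outputs $\textsc{ErrorIntervals}(G,W,a,I_0)$ where $I_0=\textsc{Initialiser}(G,W,a)$, defined as follows. $\textsc{Initialiser}$: set $L(e)=0$ for all $e$; process rounds $k$ in order of decreasing $c(w_k)$; for round $k$ let $E_k$ be the set of edges not appearing in $W$ with $k\in B_e$, set $M(e)=\max(L(e),\tfrac12(c(w_k)+c(e)))$ for $e\in E_k$, set $I_0(w_k)=\min_{e\in E_k}M(e)-c(w_k)$, then update $L(e)\leftarrow\max(L(e),c(w_k)+I_0(w_k))$ for $e\in E_k$. $\textsc{ErrorIntervals}$: $\overline{\Delta}(w_k)=I_0(w_k)$; if $e=w_K$ and $B_e\setminus\{K\}\ne\emptyset$, $\underline{\Delta}(e)=c(e)-\max_{k\in B_e\setminus\{K\}}(c(w_k)+\overline{\Delta}(w_k))$; if $e=w_K$ and $B_e\setminus\{K\}=\emptyset$, $\underline{\Delta}(e)=c(e)$; if $e$ is not in $W$, $\overline{\Delta}(e)=\infty$ and $\underline{\Delta}(e)=c(e)-\max_{k\in B_e}(c(w_k)+\overline{\Delta}(w_k))$. *)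

theory Defs
  imports Complex_Main "HOL-Library.Extended_Real" "HOL-Library.While_Combinator"
begin

definition mrta_instance :: "'v set \<Rightarrow> 'v set \<Rightarrow> bool" where
  "mrta_instance R T \<longleftrightarrow> finite R \<and> finite T \<and> R \<inter> T = {} \<and> R \<noteq> {} \<and> card (R \<union> T) \<ge> 3"

definition edges :: "'v set \<Rightarrow> 'v set \<Rightarrow> 'v set set" where
  "edges R T = {e. e \<subseteq> R \<union> T \<and> card e = 2}"

definition metric_cost :: "'v set \<Rightarrow> ('v \<Rightarrow> 'v \<Rightarrow> real) \<Rightarrow> bool" where
  "metric_cost V c \<longleftrightarrow>
     (\<forall>x\<in>V. \<forall>y\<in>V. c x y \<ge> 0 \<and> (c x y = 0 \<longleftrightarrow> x = y) \<and> c x y = c y x) \<and>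
     (\<forall>x\<in>V. \<forall>y\<in>V. \<forall>z\<in>V. c x z \<le> c x y + c y z)"

definition ecost :: "('v \<Rightarrow> 'v \<Rightarrow> real) \<Rightarrow> 'v set \<Rightarrow> real" where
  "ecost c e = (THE r. \<exists>x y. e = {x, y} \<and> r = c x y)"

definition path_cost :: "('v \<Rightarrow> 'v \<Rightarrow> real) \<Rightarrow> 'v list \<Rightarrow> real" where
  "path_cost c P = sum_list (map (\<lambda>(x, y). c x y) (zip P (tl P)))"

definition is_plan :: "'v set \<Rightarrow> 'v set \<Rightarrow> ('v \<Rightarrow> 'v list) \<Rightarrow> bool" where
  "is_plan R T Pl \<longleftrightarrow>
     (\<forall>r\<in>R. Pl r \<noteq> [] \<and> hd (Pl r) = r \<and> set (tl (Pl r)) \<subseteq> T) \<and>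
     (\<forall>r\<in>R. \<forall>r'\<in>R. r \<noteq> r' \<longrightarrow> set (Pl r) \<inter> set (Pl r') = {}) \<and>
     (\<Union>r\<in>R. set (Pl r)) = R \<union> T"

definition plan_cost :: "('v \<Rightarrow> 'v \<Rightarrow> real) \<Rightarrow> 'v set \<Rightarrow> ('v \<Rightarrow> 'v list) \<Rightarrow> real" where
  "plan_cost c R Pl = (\<Sum>r\<in>R. path_cost c (Pl r))"

text \<open>A run of Auction with edge costs w is recorded as the list of pairs (s_k, t_k), k = 1..|T|
  (0-indexed in the list), where w_k = {s_k, t_k} and t_k is the task assigned in round k.
  The predicate allows any minimiser in each round (any tie-breaking).\<close>
definition auction_run :: "'v set \<Rightarrow> 'v set \<Rightarrow> ('v set \<Rightarrow> real) \<Rightarrow> ('v \<times> 'v) list \<Rightarrow> bool" where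
  "auction_run R T w P \<longleftrightarrow> length P = card T \<and>
     (\<forall>k < length P. let A = set (map snd (take k P)); s = fst (P ! k); t = snd (P ! k) in
        s \<in> R \<union> A \<and> t \<in> T - A \<and> (\<forall>s'\<in>R \<union> A. \<forall>t'\<in>T - A. w {s, t} \<le> w {s', t'}))"

text \<open>The (deterministic, for injective costs) output of Auction for the metric c.\<close>
definition auction :: "'v set \<Rightarrow> 'v set \<Rightarrow> ('v \<Rightarrow> 'v \<Rightarrow> real) \<Rightarrow> ('v \<times> 'v) list" where
  "auction R T c = (THE P. auction_run R T (ecost c) P)"

definition wedges :: "('v \<times> 'v) list \<Rightarrow> 'v set list" where
  "wedges P = map (\<lambda>(s, t). {s, t}) P"

definition anum :: "('v \<times> 'v) list \<Rightarrow> 'v \<Rightarrow> nat" where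
  "anum P v = (if v \<in> set (map snd P) then Suc (LEAST k. snd (P ! k) = v) else 0)"

definition nbrs :: "('v \<times> 'v) list \<Rightarrow> 'v \<Rightarrow> 'v set" where
  "nbrs P v = {u. u \<noteq> v \<and> {v, u} \<in> set (wedges P)}"

definition comp :: "('v \<times> 'v) list \<Rightarrow> 'v \<Rightarrow> 'v set" where
  "comp P r = {v. (r, v) \<in> {(x, y). y \<in> nbrs P x}\<^sup>*}"

definition dfs_step :: "('v \<times> 'v) list \<Rightarrow> 'v list \<Rightarrow> 'v list" where
  "dfs_step P L = (let v = last (filter (\<lambda>v. nbrs P v - set L \<noteq> {}) L)
                   in L @ [ARG_MIN (anum P) u. u \<in> nbrs P v - set L])"

definition dfshortcut :: "('v \<times> 'v) list \<Rightarrow> 'v \<Rightarrow> 'v list" where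
  "dfshortcut P r = while (\<lambda>L. \<not> comp P r \<subseteq> set L) (dfs_step P) [r]"

definition assign :: "'v set \<Rightarrow> 'v set \<Rightarrow> ('v \<Rightarrow> 'v \<Rightarrow> real) \<Rightarrow> 'v \<Rightarrow> 'v list" where
  "assign R T c = dfshortcut (auction R T c)"

definition wk :: "('v \<times> 'v) list \<Rightarrow> nat \<Rightarrow> 'v set" where
  "wk P k = wedges P ! (k - 1)"

definition wround :: "('v \<times> 'v) list \<Rightarrow> 'v set \<Rightarrow> nat" where
  "wround P e = Suc (LEAST k. wedges P ! k = e)"

definition Bset :: "('v \<times> 'v) list \<Rightarrow> 'v set \<Rightarrow> nat set" where
  "Bset P e = {k. Min (anum P ` e) < k \<and> k \<le> Max (anum P ` e)}"

definition Eset :: "'v set set \<Rightarrow> ('v \<times> 'v) list \<Rightarrow> nat \<Rightarrow> 'v set set" where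
  "Eset E P k = {e \<in> E. e \<notin> set (wedges P) \<and> k \<in> Bset P e}"

definition init_step :: "('v set \<Rightarrow> real) \<Rightarrow> 'v set set \<Rightarrow> ('v \<times> 'v) list \<Rightarrow> nat
    \<Rightarrow> ('v set \<Rightarrow> ereal) \<times> (nat \<Rightarrow> ereal) \<Rightarrow> ('v set \<Rightarrow> ereal) \<times> (nat \<Rightarrow> ereal)" where
  "init_step ce E P k st = (let L = fst st; I = snd st; Ek = Eset E P k; cw = ce (wk P k);
      M = (\<lambda>e. max (L e) (ereal ((cw + ce e) / 2)));
      i = (INF e\<in>Ek. M e) - ereal cw
    in ((\<lambda>e. if e \<in> Ek then max (L e) (ereal cw + i) else L e), I(k := i)))"

text \<open>I_0, indexed by round k (I_0(w_k)); rounds processed in order of decreasing c(w_k).\<close>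
definition initialiser :: "('v set \<Rightarrow> real) \<Rightarrow> 'v set set \<Rightarrow> ('v \<times> 'v) list \<Rightarrow> nat \<Rightarrow> ereal" where
  "initialiser ce E P = snd (fold (init_step ce E P)
      (rev (sort_key (\<lambda>k. ce (wk P k)) [1..<length P + 1])) (\<lambda>_. 0, \<lambda>_. 0))"

definition delta_up :: "('v set \<Rightarrow> real) \<Rightarrow> 'v set set \<Rightarrow> ('v \<times> 'v) list \<Rightarrow> 'v set \<Rightarrow> ereal" where
  "delta_up ce E P e = (if e \<in> set (wedges P) then initialiser ce E P (wround P e) else \<infinity>)"

definition delta_low :: "('v set \<Rightarrow> real) \<Rightarrow> 'v set set \<Rightarrow> ('v \<times> 'v) list \<Rightarrow> 'v set \<Rightarrow> ereal" where
  "delta_low ce E P e =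
     (if e \<in> set (wedges P) then
        (let S = Bset P e - {wround P e} in
          if S \<noteq> {} then ereal (ce e) - (SUP k\<in>S. ereal (ce (wk P k)) + delta_up ce E P (wk P k))
          else ereal (ce e))
      else ereal (ce e) - (SUP k\<in>Bset P e. ereal (ce (wk P k)) + delta_up ce E P (wk P k)))"

end

theory Submission
  imports Defs
begin

(* Auction is Prim's algorithm grown from the whole set of robots: each round adds a cheapest edge
   between the reached vertices R \<union> A and an unreached task. Its winning edges W therefore form a
   forest with one tree per robot and, by the usual exchange argument, weigh no more than any edge
   set connecting every task to a robot, e.g. the edges of an optimal plan. DFShortcut visits each
   tree in depth-first order, shortcutting the way back by the triangle inequality, so every route
   costs at most twice the weight of its tree: this gives the factor 2.

   For robustness, let e be any other candidate of round k. Then k \<in> B_e, and the definition of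
   the lower bound alone gives c'(w_k) \<le> c(w_k) + \<Delta>_up(w_k) \<le> c(e) - \<Delta>_low(e) < c'(e), so
   under c' every round is won by the same edge and Auction, hence Assign, is unchanged. *)

section \<open>Metric costs and paths\<close>

lemma metric_nonneg: "metric_cost V c \<Longrightarrow> x \<in> V \<Longrightarrow> y \<in> V \<Longrightarrow> 0 \<le> c x y"
  unfolding metric_cost_def by blast

lemma metric_sym: "metric_cost V c \<Longrightarrow> x \<in> V \<Longrightarrow> y \<in> V \<Longrightarrow> c x y = c y x"
  unfolding metric_cost_def by blast

lemma metric_refl: "metric_cost V c \<Longrightarrow> x \<in> V \<Longrightarrow> c x x = 0"
  unfolding metric_cost_def by blast

lemma metric_triangle:
  "metric_cost V c \<Longrightarrow> x \<in> V \<Longrightarrow> y \<in> V \<Longrightarrow> z \<in> V \<Longrightarrow> c x z \<le> c x y + c y z"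
  unfolding metric_cost_def by blast

lemma ecost_doubleton:
  assumes "metric_cost V c" "x \<in> V" "y \<in> V"
  shows "ecost c {x, y} = c x y"
  unfolding ecost_def
proof (rule the_equality)
  fix r assume "\<exists>x' y'. {x, y} = {x', y'} \<and> r = c x' y'"
  then show "r = c x y"
    using metric_sym[OF assms] assms(2,3) by (auto simp: doubleton_eq_iff)
qed blast

lemma path_cost_Nil [simp]: "path_cost c [] = 0"
  and path_cost_singleton [simp]: "path_cost c [x] = 0"
  and path_cost_Cons_Cons [simp]: "path_cost c (x # y # xs) = c x y + path_cost c (y # xs)"
  by (simp_all add: path_cost_def)

lemma path_cost_snoc: "xs \<noteq> [] \<Longrightarrow> path_cost c (xs @ [y]) = path_cost c xs + c (last xs) y"
  by (induction xs rule: induct_list012) auto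

lemma path_cost_append_Cons:
  "path_cost c (xs @ y # ys) = path_cost c (xs @ [y]) + path_cost c (y # ys)"
  by (induction xs rule: induct_list012) (auto simp: neq_Nil_conv)

lemma path_cost_conv_sum:
  "path_cost c xs = (\<Sum>i<length xs - 1. c (xs ! i) (xs ! Suc i))"
  by (induction xs rule: induct_list012) (simp_all add: lessThan_Suc_eq_insert_0 sum.reindex)

lemma path_cost_nonneg: "metric_cost V c \<Longrightarrow> set xs \<subseteq> V \<Longrightarrow> 0 \<le> path_cost c xs"
  by (induction xs rule: induct_list012) (auto intro: add_nonneg_nonneg metric_nonneg)

lemma path_cost_ge_ends:
  "metric_cost V c \<Longrightarrow> set xs \<subseteq> V \<Longrightarrow> xs \<noteq> [] \<Longrightarrow> c (hd xs) (last xs) \<le> path_cost c xs"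
proof (induction xs rule: induct_list012)
  case (2 x)
  then show ?case by (simp add: metric_refl)
next
  case (3 x y zs)
  then have "c x (last (y # zs)) \<le> c x y + c y (last (y # zs))"
    by (intro metric_triangle) auto
  with 3 show ?case by simp
qed simp

section \<open>Auction runs\<close>

definition edge_rel :: "'v set set \<Rightarrow> ('v \<times> 'v) set" where
  "edge_rel F = {(x, y). {x, y} \<in> F}"

lemma sym_edge_rel: "sym (edge_rel F)"
  unfolding edge_rel_def sym_def by (auto simp: insert_commute)

lemma rtrancl_first_entry:
  assumes "(a, b) \<in> r\<^sup>*" "a \<notin> X" "b \<in> X"
  shows "\<exists>y z. (a, y) \<in> (Restr r (-X))\<^sup>* \<and> (y, z) \<in> r \<and> y \<notin> X \<and> z \<in> X"
  using assms
proof (induction rule: converse_rtrancl_induct)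
  case (step a a')
  show ?case
  proof (cases "a' \<in> X")
    case False
    with step obtain y z where "(a', y) \<in> (Restr r (-X))\<^sup>*" "(y, z) \<in> r" "y \<notin> X" "z \<in> X"
      by blast
    moreover have "(a, a') \<in> Restr r (-X)"
      using step False by blast
    ultimately show ?thesis
      by (meson converse_rtrancl_into_rtrancl)
  qed (use step in blast)
qed simp

lemma edge_rel_reach_after_removal:
  assumes "(a, r0) \<in> (edge_rel F)\<^sup>*" "r0 \<in> R" "z \<in> R"
    and "(y, t) \<in> (edge_rel (F - {{y, z}}))\<^sup>*"
  shows "\<exists>r'\<in>insert t R. (a, r') \<in> (edge_rel (F - {{y, z}}))\<^sup>*"
  using assms(1)
proof (induction rule: converse_rtrancl_induct)
  case (step a b)
  then obtain r' where r': "r' \<in> insert t R" "(b, r') \<in> (edge_rel (F - {{y, z}}))\<^sup>*"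
    by blast
  show ?case
  proof (cases "{a, b} = {y, z}")
    case False
    then have "(a, b) \<in> edge_rel (F - {{y, z}})"
      using step(1) by (auto simp: edge_rel_def)
    with r' show ?thesis
      by (meson converse_rtrancl_into_rtrancl)
  qed (use assms(3,4) in \<open>auto simp: doubleton_eq_iff\<close>)
qed (use assms(2) in blast)

abbreviation assigned :: "('v \<times> 'v) list \<Rightarrow> nat \<Rightarrow> 'v set" where
  "assigned P k \<equiv> set (map snd (take k P))"

lemma candidate_ne: "s \<in> R \<union> A \<Longrightarrow> t \<in> T - A \<Longrightarrow> R \<inter> T = {} \<Longrightarrow> s \<noteq> t"
  by blast

lemma auction_run_Nil: "auction_run R T w [] \<longleftrightarrow> card T = 0"
  by (simp add: auction_run_def)

lemma auction_run_Cons: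
  assumes "finite T"
  shows "auction_run R T w ((s, t) # P) \<longleftrightarrow>
    s \<in> R \<and> t \<in> T \<and> (\<forall>s'\<in>R. \<forall>t'\<in>T. w {s, t} \<le> w {s', t'}) \<and>
    auction_run (insert t R) (T - {t}) w P"
proof -
  have assigned_Suc: "R \<union> assigned ((s, t) # P) (Suc k) = insert t R \<union> assigned P k"
    "T - assigned ((s, t) # P) (Suc k) = (T - {t}) - assigned P k" for k
    by auto
  have all_less_Suc: "(\<forall>k < Suc n. Q k) \<longleftrightarrow> Q 0 \<and> (\<forall>k<n. Q (Suc k))" for Q and n :: nat
    using less_Suc_eq_0_disj by auto
  have "t \<in> T \<Longrightarrow> Suc (length P) = card T \<longleftrightarrow> length P = card (T - {t})"
    using assms by (simp add: card_Suc_Diff1[symmetric] del: card_Diff_insert)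
  then show ?thesis
    unfolding auction_run_def length_Cons all_less_Suc Let_def nth_Cons_Suc assigned_Suc
    by auto
qed

lemma auction_run_exists:
  assumes "finite R" "finite T" "R \<noteq> {}"
  shows "\<exists>P. auction_run R T w P"
  using assms
proof (induction "card T" arbitrary: R T)
  case 0
  then have "auction_run R T w []"
    by (simp add: auction_run_Nil)
  then show ?case ..
next
  case (Suc n)
  then have "R \<times> T \<noteq> {}" "finite (R \<times> T)"
    by auto
  then obtain s t where st: "(s, t) \<in> R \<times> T" and min: "\<forall>(s', t')\<in>R \<times> T. w {s, t} \<le> w {s', t'}"
    using ex_is_arg_min_if_finite[of "R \<times> T" "\<lambda>(s, t). w {s, t}"]
    by (auto simp: is_arg_min_linorder)
  have "n = card (T - {t})"
    using Suc.hyps(2) Suc.prems(2) st by simp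
  then obtain P where "auction_run (insert t R) (T - {t}) w P"
    using Suc.hyps(1)[of "T - {t}" "insert t R"] Suc.prems by blast
  with st min have "auction_run R T w ((s, t) # P)"
    using Suc.prems by (auto simp: auction_run_Cons)
  then show ?case ..
qed

lemma auction_weight_le_connecting:
  assumes "auction_run R T w P" "finite T" "R \<inter> T = {}" "finite F"
    and "\<And>e. e \<in> F \<Longrightarrow> e \<subseteq> R \<union> T \<and> 0 \<le> w e"
    and "\<And>t. t \<in> T \<Longrightarrow> \<exists>r\<in>R. (t, r) \<in> (edge_rel F)\<^sup>*"
  shows "sum_list (map w (wedges P)) \<le> sum w F"
  using assms
proof (induction P arbitrary: R T F)
  case Nil
  then show ?case by (simp add: wedges_def sum_nonneg)
next
  case (Cons p P)
  obtain s t where p: "p = (s, t)" by force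
  with Cons.prems(1) have "auction_run R T w ((s, t) # P)"
    by simp
  then have t: "t \<in> T"
    and min: "\<forall>s'\<in>R. \<forall>t'\<in>T. w {s, t} \<le> w {s', t'}"
    and run: "auction_run (insert t R) (T - {t}) w P"
    unfolding auction_run_Cons[OF Cons.prems(2)] by blast+
  with Cons.prems(3) have tR: "t \<notin> R"
    by blast
  \<comment> \<open>Exchange argument: a path in F from t to a robot enters R along an edge {y, z} whose
    task y was a candidate of this round; dropping {y, z} keeps every task connected to R \<union> {t}.\<close>
  obtain r where "r \<in> R" "(t, r) \<in> (edge_rel F)\<^sup>*"
    using Cons.prems(6) t by blast
  with tR obtain y z where path: "(t, y) \<in> (Restr (edge_rel F) (-R))\<^sup>*"
    and yz: "{y, z} \<in> F" "y \<notin> R" "z \<in> R"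
    using rtrancl_first_entry[of t r "edge_rel F" R] by (auto simp: edge_rel_def)
  have "y \<in> T"
    using yz Cons.prems(5) by blast
  with min yz(3) have "w {s, t} \<le> w {z, y}"
    by blast
  then have le: "w {s, t} \<le> w {y, z}"
    by (simp add: insert_commute)
  have "Restr (edge_rel F) (-R) \<subseteq> edge_rel (F - {{y, z}})"
    using yz(3) by (auto simp: edge_rel_def doubleton_eq_iff)
  then have "(t, y) \<in> (edge_rel (F - {{y, z}}))\<^sup>*"
    using path by (rule rtrancl_mono[THEN subsetD])
  then have yt: "(y, t) \<in> (edge_rel (F - {{y, z}}))\<^sup>*"
    by (rule symD[OF sym_rtrancl[OF sym_edge_rel]])
  have "sum_list (map w (wedges P)) \<le> sum w (F - {{y, z}})"
  proof (rule Cons.IH[OF run])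
    fix t' assume "t' \<in> T - {t}"
    then obtain r0 where "r0 \<in> R" "(t', r0) \<in> (edge_rel F)\<^sup>*"
      using Cons.prems(6) by blast
    then show "\<exists>r'\<in>insert t R. (t', r') \<in> (edge_rel (F - {{y, z}}))\<^sup>*"
      using edge_rel_reach_after_removal[OF _ _ yz(3) yt] by blast
  qed (use Cons.prems(2-5) t in auto)
  moreover have "sum w F = w {y, z} + sum w (F - {{y, z}})"
    using Cons.prems(4) yz(1) by (simp add: sum.remove)
  ultimately show ?case
    using le p by (simp add: wedges_def)
qed

section \<open>The forest of winning edges\<close>

lemma length_wedges [simp]: "length (wedges P) = length P"
  by (simp add: wedges_def)

lemma wedges_nth: "k < length P \<Longrightarrow> wedges P ! k = {fst (P ! k), snd (P ! k)}"
  by (simp add: wedges_def split_beta)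

(* The parent of task t is the vertex from which t was won. Parents carry smaller assignment
   numbers, so length P iterations lead every vertex to the robot of its tree. *)
definition parent :: "('v \<times> 'v) list \<Rightarrow> 'v \<Rightarrow> 'v" where
  "parent P v = (if v \<in> set (map snd P) then fst (P ! (anum P v - 1)) else v)"

definition root :: "('v \<times> 'v) list \<Rightarrow> 'v \<Rightarrow> 'v" where
  "root P v = (parent P ^^ length P) v"

lemma self_in_comp: "r \<in> comp P r"
  by (simp add: comp_def)

lemma comp_nbrs_closed: "v \<in> comp P r \<Longrightarrow> u \<in> nbrs P v \<Longrightarrow> u \<in> comp P r"
  by (auto simp: comp_def intro: rtrancl_into_rtrancl)

locale auction_forest =
  fixes R T :: "'v set" and w :: "'v set \<Rightarrow> real" and P :: "('v \<times> 'v) list"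
  assumes run: "auction_run R T w P" and finite_T: "finite T" and disjoint: "R \<inter> T = {}"
begin

lemma length_eq: "length P = card T"
  using run by (simp add: auction_run_def)

lemma winner:
  assumes "k < length P"
  shows "fst (P ! k) \<in> R \<union> assigned P k" "snd (P ! k) \<in> T - assigned P k"
    "\<forall>s\<in>R \<union> assigned P k. \<forall>t\<in>T - assigned P k. w (wedges P ! k) \<le> w {s, t}"
  using run assms unfolding auction_run_def Let_def wedges_nth[OF assms] by blast+

lemma snd_nth_assigned: "i < k \<Longrightarrow> i < length P \<Longrightarrow> snd (P ! i) \<in> assigned P k"
  by (metis length_map length_take min_less_iff_conj nth_map nth_mem nth_take)

lemma distinct_tasks: "distinct (map snd P)"
proof -
  have "snd (P ! i) \<noteq> snd (P ! j)" if "i < j" "j < length P" for i j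
  proof -
    have "snd (P ! i) \<in> assigned P j"
      using that by (intro snd_nth_assigned) auto
    moreover have "snd (P ! j) \<notin> assigned P j"
      using winner(2)[OF that(2)] by blast
    ultimately show ?thesis
      by metis
  qed
  then show ?thesis
    unfolding distinct_conv_nth by (metis length_map linorder_neqE_nat nth_map)
qed

lemma set_tasks: "set (map snd P) = T"
proof (rule card_subset_eq[OF finite_T])
  show "set (map snd P) \<subseteq> T"
    using winner(2) by (force simp: in_set_conv_nth)
  show "card (set (map snd P)) = card T"
    using distinct_card[OF distinct_tasks] length_eq by simp
qed

lemma task_conv_nth: "v \<in> T \<Longrightarrow> \<exists>k<length P. v = snd (P ! k)"
  using set_tasks by (metis in_set_conv_nth length_map nth_map)

lemma assigned_subset: "assigned P k \<subseteq> T"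
  using set_tasks by (metis image_mono set_map set_take_subset)

lemma winner_in_vertices:
  assumes "k < length P"
  shows "fst (P ! k) \<in> R \<union> T" "snd (P ! k) \<in> T" "fst (P ! k) \<noteq> snd (P ! k)"
  using winner(1)[OF assms] winner(2)[OF assms] assigned_subset[of k]
    candidate_ne[OF winner(1,2)[OF assms] disjoint]
  by blast+

lemma anum_nth:
  assumes "k < length P"
  shows "anum P (snd (P ! k)) = Suc k"
proof -
  have "(LEAST j. snd (P ! j) = snd (P ! k)) = k"
  proof (rule Least_equality)
    fix j assume "snd (P ! j) = snd (P ! k)"
    then show "k \<le> j"
      using nth_eq_iff_index_eq[OF distinct_tasks, of j k] assms
      by (cases "j < length P") auto
  qed simp
  moreover have "snd (P ! k) \<in> set (map snd P)"
    using assms by (metis length_map nth_map nth_mem)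
  ultimately show ?thesis
    by (simp add: anum_def)
qed

lemma anum_eq_0: "v \<notin> T \<Longrightarrow> anum P v = 0"
  using set_tasks by (simp add: anum_def)

lemma anum_le_if_reached: "v \<in> R \<union> assigned P k \<Longrightarrow> anum P v \<le> k"
proof (elim UnE)
  assume "v \<in> assigned P k"
  then obtain i where "i < k" "i < length P" "v = snd (P ! i)"
    by (auto simp: in_set_conv_nth)
  then show ?thesis
    by (simp add: anum_nth)
qed (use disjoint anum_eq_0 in fastforce)

lemma anum_gt_if_unreached:
  assumes "v \<in> T - assigned P k"
  shows "k < anum P v"
proof -
  obtain i where i: "i < length P" "v = snd (P ! i)"
    using assms task_conv_nth by blast
  with assms have "\<not> i < k"
    using snd_nth_assigned by blast
  with i show ?thesis
    by (simp add: anum_nth)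
qed

lemma anum_le_length: "anum P v \<le> length P"
proof (cases "v \<in> T")
  case True
  then obtain k where "k < length P" "v = snd (P ! k)"
    using task_conv_nth by blast
  then show ?thesis
    by (simp add: anum_nth)
qed (simp add: anum_eq_0)

lemma anum_fst_le: "k < length P \<Longrightarrow> anum P (fst (P ! k)) \<le> k"
  using winner(1) anum_le_if_reached by blast

lemma parent_nth: "k < length P \<Longrightarrow> parent P (snd (P ! k)) = fst (P ! k)"
  by (simp add: parent_def anum_nth)

lemma funpow_parent_robot: "v \<in> R \<Longrightarrow> (parent P ^^ m) v = v"
  using set_tasks disjoint by (induction m) (auto simp: parent_def)

lemma funpow_parent_in_R: "v \<in> R \<union> T \<Longrightarrow> anum P v \<le> m \<Longrightarrow> (parent P ^^ m) v \<in> R"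
proof (induction m arbitrary: v)
  case 0
  then show ?case
    using anum_nth task_conv_nth by fastforce
next
  case (Suc m)
  show ?case
  proof (cases "v \<in> R")
    case False
    with Suc.prems obtain k where k: "k < length P" "v = snd (P ! k)"
      using task_conv_nth by blast
    with Suc.prems(2) have "anum P (fst (P ! k)) \<le> m"
      using anum_fst_le[OF k(1)] by (simp add: anum_nth)
    then have "(parent P ^^ m) (fst (P ! k)) \<in> R"
      using Suc.IH winner_in_vertices(1)[OF k(1)] by blast
    with k show ?thesis
      by (simp add: funpow_Suc_right parent_nth del: funpow.simps)
  qed (simp add: funpow_parent_robot del: funpow.simps)
qed

lemma root_in_R: "v \<in> R \<union> T \<Longrightarrow> root P v \<in> R"
  unfolding root_def using funpow_parent_in_R anum_le_length by blast

lemma root_robot: "v \<in> R \<Longrightarrow> root P v = v"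
  unfolding root_def by (rule funpow_parent_robot)

lemma root_nth:
  assumes k: "k < length P"
  shows "root P (snd (P ! k)) = root P (fst (P ! k))"
proof -
  obtain n where n: "length P = Suc n"
    using k by (cases "length P") auto
  have "(parent P ^^ n) (fst (P ! k)) \<in> R"
    using funpow_parent_in_R winner_in_vertices(1)[OF k] anum_fst_le[OF k] k n by simp
  then have "root P (fst (P ! k)) = (parent P ^^ n) (fst (P ! k))"
    using funpow_parent_robot[of _ 1] by (simp add: root_def n)
  moreover have "root P (snd (P ! k)) = (parent P ^^ n) (fst (P ! k))"
    unfolding root_def n by (simp add: funpow_Suc_right parent_nth[OF k] del: funpow.simps)
  ultimately show ?thesis
    by simp
qed

lemma nbrs_conv_nth: "u \<in> nbrs P v \<Longrightarrow> \<exists>k<length P. {v, u} = {fst (P ! k), snd (P ! k)}"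
  unfolding nbrs_def by (fastforce simp: in_set_conv_nth wedges_nth)

lemma nth_in_nbrs: "k < length P \<Longrightarrow> snd (P ! k) \<in> nbrs P (fst (P ! k))"
  using winner_in_vertices(3) by (force simp: nbrs_def wedges_nth[symmetric])

lemma root_nbrs:
  assumes "u \<in> nbrs P v"
  shows "u \<in> R \<union> T" "root P u = root P v"
  using nbrs_conv_nth[OF assms] winner_in_vertices root_nth by (auto simp: doubleton_eq_iff)

lemma in_comp_root: "v \<in> R \<union> T \<Longrightarrow> v \<in> comp P (root P v)"
proof (induction "anum P v" arbitrary: v rule: less_induct)
  case less
  show ?case
  proof (cases "v \<in> R")
    case False
    with less.prems obtain k where k: "k < length P" "v = snd (P ! k)"
      using task_conv_nth by blast
    then have "fst (P ! k) \<in> comp P (root P (fst (P ! k)))"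
      using anum_fst_le[OF k(1)] anum_nth[OF k(1)] winner_in_vertices(1)[OF k(1)]
      by (intro less.hyps) auto
    then show ?thesis
      using k root_nth nth_in_nbrs comp_nbrs_closed by metis
  qed (simp add: root_robot self_in_comp)
qed

lemma comp_eq_root: "r \<in> R \<Longrightarrow> comp P r = {v \<in> R \<union> T. root P v = r}"
proof (intro equalityI subsetI)
  fix v assume "r \<in> R" "v \<in> comp P r"
  then have "(r, v) \<in> {(x, y). y \<in> nbrs P x}\<^sup>*"
    by (simp add: comp_def)
  then show "v \<in> {v \<in> R \<union> T. root P v = r}"
    by induction (use \<open>r \<in> R\<close> root_robot root_nbrs in auto)
qed (use in_comp_root in auto)

lemma comp_subset: "r \<in> R \<Longrightarrow> comp P r \<subseteq> R \<union> T"
  by (auto simp: comp_eq_root)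

lemma comp_Int_R: "r \<in> R \<Longrightarrow> comp P r \<inter> R = {r}"
  by (auto simp: comp_eq_root root_robot)

lemma comp_disjoint: "r \<in> R \<Longrightarrow> r' \<in> R \<Longrightarrow> r \<noteq> r' \<Longrightarrow> comp P r \<inter> comp P r' = {}"
  by (auto simp: comp_eq_root)

lemma UN_comp: "(\<Union>r\<in>R. comp P r) = R \<union> T"
  using comp_eq_root root_in_R by auto

lemma finite_comp: "r \<in> R \<Longrightarrow> finite (comp P r)"
proof -
  assume "r \<in> R"
  then have "comp P r \<subseteq> insert r T"
    using comp_subset comp_Int_R by blast
  then show ?thesis
    using finite_T finite_subset by blast
qed

lemma ecost_wedge_nonneg:
  "metric_cost (R \<union> T) c \<Longrightarrow> k < length P \<Longrightarrow> 0 \<le> ecost c (wedges P ! k)"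
  using winner_in_vertices by (simp add: wedges_nth ecost_doubleton metric_nonneg)

lemma run_eq_if_strict_winners:
  assumes P': "auction_run R T w' P'"
    and strict: "\<And>k s t. k < length P \<Longrightarrow> s \<in> R \<union> assigned P k \<Longrightarrow> t \<in> T - assigned P k \<Longrightarrow>
      {s, t} \<noteq> wedges P ! k \<Longrightarrow> w' (wedges P ! k) < w' {s, t}"
  shows "P' = P"
proof -
  interpret P': auction_forest R T w' P'
    using P' finite_T disjoint by unfold_locales
  have "take k P' = take k P" if "k \<le> length P" for k
    using that
  proof (induction k)
    case (Suc k)
    then have k: "k < length P" "k < length P'" and prefix: "take k P' = take k P"
      using length_eq P'.length_eq by auto
    have s': "fst (P' ! k) \<in> R \<union> assigned P k" and t': "snd (P' ! k) \<in> T - assigned P k"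
      using P'.winner(1,2)[OF k(2)] prefix by simp_all
    have "{fst (P' ! k), snd (P' ! k)} = wedges P ! k"
    proof (rule ccontr)
      assume "{fst (P' ! k), snd (P' ! k)} \<noteq> wedges P ! k"
      then have "w' (wedges P ! k) < w' (wedges P' ! k)"
        using strict[OF k(1) s' t'] wedges_nth[OF k(2)] by simp
      moreover have "w' (wedges P' ! k) \<le> w' (wedges P ! k)"
        using P'.winner(3)[OF k(2)] winner(1,2)[OF k(1)] prefix by (simp add: wedges_nth[OF k(1)])
      ultimately show False
        by simp
    qed
    moreover have "snd (P' ! k) \<noteq> fst (P ! k)" "snd (P ! k) \<noteq> fst (P' ! k)"
      using candidate_ne[OF winner(1)[OF k(1)] t' disjoint] candidate_ne[OF s' winner(2)[OF k(1)] disjoint]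
      by auto
    ultimately have "P' ! k = P ! k"
      by (auto simp: wedges_nth[OF k(1)] doubleton_eq_iff prod_eq_iff)
    with prefix k show ?case
      by (simp add: take_Suc_conv_app_nth)
  qed simp
  then show ?thesis
    using length_eq P'.length_eq by (metis order_refl take_all)
qed

end

section \<open>Depth-first shortcutting\<close>

lemma last_filter_last: "xs \<noteq> [] \<Longrightarrow> Q (last xs) \<Longrightarrow> last (filter Q xs) = last xs"
  by (induction xs rule: rev_induct) auto

lemma filter_push:
  assumes "distinct (L1 @ v # L2)" "u \<notin> set (L1 @ v # L2)" "v \<in> Z"
  shows "filter (\<lambda>x. x \<in> Z - set L2 \<union> {u}) (L1 @ v # L2 @ [u]) = filter (\<lambda>x. x \<in> Z) L1 @ [v, u]"
proof -
  have "filter (\<lambda>x. x \<in> Z - set L2 \<union> {u}) L1 = filter (\<lambda>x. x \<in> Z) L1"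
    using assms(1,2) by (intro filter_cong) auto
  moreover have "filter (\<lambda>x. x \<in> Z - set L2 \<union> {u}) L2 = []"
    using assms(2) by (auto simp: filter_empty_conv)
  ultimately show ?thesis
    using assms by auto
qed

(* Moving from the end of L to a new neighbour u of v is paid for by walking back along the
   popped part S of the stack to v and then taking the edge v u. *)
lemma path_cost_push_bound:
  assumes "metric_cost V c" "set L \<subseteq> V" "set (v # S) \<subseteq> V" "u \<in> V"
    and "L \<noteq> []" "last L = last (v # S)"
  shows "path_cost c (L @ [u]) + path_cost c (S0 @ [v, u])
    \<le> path_cost c L + path_cost c (S0 @ v # S) + 2 * c v u"
proof -
  have last_V: "last (v # S) \<in> V"
    using assms(3) last_in_set by blast
  have "c (last L) u \<le> c (last (v # S)) v + c v u"
    using metric_triangle[OF assms(1) last_V _ assms(4)] assms(3,6) by simp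
  also have "c (last (v # S)) v = c v (last (v # S))"
    using metric_sym[OF assms(1) last_V] assms(3) by simp
  also have "\<dots> \<le> path_cost c (v # S)"
    using path_cost_ge_ends[OF assms(1,3)] by simp
  finally have "c (last L) u \<le> path_cost c (v # S) + c v u" by simp
  then show ?thesis
    using path_cost_append_Cons[of c S0 v "[u]"] path_cost_append_Cons[of c S0 v S]
    by (simp add: path_cost_snoc[OF assms(5)])
qed

lemma dfs_step_split:
  assumes "x \<in> set L" "nbrs P x - set L \<noteq> {}"
  obtains L1 v L2 u where "L = L1 @ v # L2" "\<forall>x\<in>set L2. nbrs P x \<subseteq> set L"
    "u \<in> nbrs P v" "u \<notin> set L" "dfs_step P L = L @ [u]"
proof -
  let ?Q = "\<lambda>v. nbrs P v - set L \<noteq> {}"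
  obtain L1 v L2 where L: "L = L1 @ v # L2" and "?Q v" and L2: "\<forall>x\<in>set L2. \<not> ?Q x"
    using split_list_last_propE[of L ?Q] assms by blast
  then have "last (filter ?Q L) = v"
    by simp
  moreover obtain u0 where "u0 \<in> nbrs P v - set L"
    using \<open>?Q v\<close> by blast
  then have "(ARG_MIN (anum P) u. u \<in> nbrs P v - set L) \<in> nbrs P v - set L"
    using arg_min_nat_lemma by metis
  ultimately show ?thesis
    using that[OF L] L2 by (auto simp: dfs_step_def Let_def)
qed

definition tree_weight :: "('v \<Rightarrow> 'v \<Rightarrow> real) \<Rightarrow> ('v \<times> 'v) list \<Rightarrow> 'v set \<Rightarrow> real" where
  "tree_weight c P X = (\<Sum>k | k < length P \<and> wedges P ! k \<subseteq> X. ecost c (wedges P ! k))"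

locale shortcut_tour = auction_forest +
  fixes c :: "'v \<Rightarrow> 'v \<Rightarrow> real" and r :: 'v
  assumes metric: "metric_cost (R \<union> T) c" and robot: "r \<in> R"
begin

lemma tree_weight_nonneg: "0 \<le> tree_weight c P X"
  unfolding tree_weight_def by (intro sum_nonneg ecost_wedge_nonneg[OF metric]) simp

lemma tree_weight_insert:
  assumes "u \<in> nbrs P v" "v \<in> X" "u \<notin> X"
  shows "tree_weight c P X + c v u \<le> tree_weight c P (insert u X)"
proof -
  obtain k where k: "k < length P" "wedges P ! k = {v, u}"
    using nbrs_conv_nth[OF assms(1)] by (auto simp: wedges_nth)
  let ?K = "\<lambda>X. {k. k < length P \<and> wedges P ! k \<subseteq> X}"
  have "v \<in> R \<union> T" "u \<in> R \<union> T"
    using k winner_in_vertices[OF k(1)] by (auto simp: wedges_nth doubleton_eq_iff)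
  then have "tree_weight c P X + c v u = sum (\<lambda>k. ecost c (wedges P ! k)) (insert k (?K X))"
    using k assms(3) by (simp add: tree_weight_def ecost_doubleton[OF metric])
  also have "\<dots> \<le> tree_weight c P (insert u X)"
    unfolding tree_weight_def using k assms(2)
    by (intro sum_mono2 ecost_wedge_nonneg[OF metric]) auto
  finally show ?thesis .
qed

(* Vertices of L outside Z are finished, so Z contains the DFS stack, and filtering L to Z
   gives the way back from the current vertex to the root. The invariant bounds the tour so far
   plus the way back by a doubled traversal of the explored subtree. *)
definition dfs_inv :: "'v list \<Rightarrow> 'v set \<Rightarrow> bool" where
  "dfs_inv L Z \<longleftrightarrow> L \<noteq> [] \<and> hd L = r \<and> distinct L \<and> set L \<subseteq> comp P r \<and> last L \<in> Z \<and>
     (\<forall>x\<in>set L - Z. nbrs P x \<subseteq> set L) \<and>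
     path_cost c L + path_cost c (filter (\<lambda>x. x \<in> Z) L) \<le> 2 * tree_weight c P (set L)"

lemma dfs_inv_init: "dfs_inv [r] {r}"
  using tree_weight_nonneg self_in_comp by (simp add: dfs_inv_def)

lemma dfs_inv_push:
  assumes inv: "dfs_inv L Z" and split: "L = L1 @ v # L2" and L2: "\<forall>x\<in>set L2. nbrs P x \<subseteq> set L"
    and u: "u \<in> nbrs P v" "u \<notin> set L"
  shows "dfs_inv (L @ [u]) (Z - set L2 \<union> {u})"
proof -
  define Z' where "Z' = Z - set L2 \<union> {u}"
  have L: "L \<noteq> []" "hd L = r" "distinct L" "set L \<subseteq> comp P r" "last L \<in> Z"
    and closed: "\<forall>x\<in>set L - Z. nbrs P x \<subseteq> set L"
    and cost: "path_cost c L + path_cost c (filter (\<lambda>x. x \<in> Z) L) \<le> 2 * tree_weight c P (set L)"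
    using inv by (auto simp: dfs_inv_def)
  have "v \<in> set L"
    using split by simp
  with closed u have "v \<in> Z"
    by blast
  have "v \<in> comp P r"
    using L(4) \<open>v \<in> set L\<close> by blast
  then have "u \<in> comp P r"
    using u(1) by (rule comp_nbrs_closed)
  have stack: "filter (\<lambda>x. x \<in> Z) L = filter (\<lambda>x. x \<in> Z) L1 @ v # filter (\<lambda>x. x \<in> Z) L2"
    using split \<open>v \<in> Z\<close> by simp
  have "filter (\<lambda>x. x \<in> Z') (L1 @ v # L2 @ [u]) = filter (\<lambda>x. x \<in> Z) L1 @ [v, u]"
    unfolding Z'_def using L(3) u(2) \<open>v \<in> Z\<close> split by (intro filter_push) auto
  then have stack': "filter (\<lambda>x. x \<in> Z') (L @ [u]) = filter (\<lambda>x. x \<in> Z) L1 @ [v, u]"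
    using split by simp
  have V: "set L \<subseteq> R \<union> T" "u \<in> R \<union> T"
    using L(4) \<open>u \<in> comp P r\<close> comp_subset[OF robot] by auto
  have "set (v # filter (\<lambda>x. x \<in> Z) L2) \<subseteq> set L"
    using split by auto
  moreover have "last L = last (v # filter (\<lambda>x. x \<in> Z) L2)"
    using last_filter_last[of L "\<lambda>x. x \<in> Z"] L(1,5) stack by simp
  ultimately have "path_cost c (L @ [u]) + path_cost c (filter (\<lambda>x. x \<in> Z') (L @ [u]))
      \<le> path_cost c L + path_cost c (filter (\<lambda>x. x \<in> Z) L) + 2 * c v u"
    unfolding stack stack' using path_cost_push_bound[OF metric V(1) _ V(2) L(1)] V(1) by blast
  also have "\<dots> \<le> 2 * tree_weight c P (set (L @ [u]))"
    using cost tree_weight_insert[OF u(1) \<open>v \<in> set L\<close> u(2)] by simp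
  finally have cost': "path_cost c (L @ [u]) + path_cost c (filter (\<lambda>x. x \<in> Z') (L @ [u]))
      \<le> 2 * tree_weight c P (set (L @ [u]))" .
  have closed': "\<forall>x\<in>set (L @ [u]) - Z'. nbrs P x \<subseteq> set (L @ [u])"
    using closed L2 by (auto simp: Z'_def)
  have "dfs_inv (L @ [u]) Z'"
    unfolding dfs_inv_def using L u(2) \<open>u \<in> comp P r\<close> cost' closed' by (simp add: Z'_def)
  then show ?thesis
    by (simp add: Z'_def)
qed

lemma dfs_inv_step:
  assumes inv: "dfs_inv L Z" and unfinished: "\<not> comp P r \<subseteq> set L"
  obtains u Z' where "u \<in> comp P r - set L" "dfs_step P L = L @ [u]" "dfs_inv (L @ [u]) Z'"
proof -
  obtain y where "(r, y) \<in> {(x, y). y \<in> nbrs P x}\<^sup>*" "y \<in> - set L"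
    using unfinished by (auto simp: comp_def)
  moreover have "r \<notin> - set L"
    using inv hd_in_set by (fastforce simp: dfs_inv_def)
  ultimately obtain x z where "(x, z) \<in> {(x, y). y \<in> nbrs P x}" "x \<notin> - set L" "z \<in> - set L"
    using rtrancl_first_entry by meson
  then have "x \<in> set L" "nbrs P x - set L \<noteq> {}"
    by auto
  then obtain L1 v L2 u where split: "L = L1 @ v # L2" and L2: "\<forall>x\<in>set L2. nbrs P x \<subseteq> set L"
    and u: "u \<in> nbrs P v" "u \<notin> set L" and step: "dfs_step P L = L @ [u]"
    by (rule dfs_step_split)
  moreover have "dfs_inv (L @ [u]) (Z - set L2 \<union> {u})"
    by (rule dfs_inv_push[OF inv split L2 u])
  moreover from this have "u \<in> comp P r"
    by (simp add: dfs_inv_def)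
  ultimately show ?thesis
    using that u(2) by blast
qed

lemma dfshortcut_tour:
  "set (dfshortcut P r) = comp P r \<and> hd (dfshortcut P r) = r \<and> distinct (dfshortcut P r) \<and>
   path_cost c (dfshortcut P r) \<le> 2 * tree_weight c P (comp P r)"
  unfolding dfshortcut_def
proof (rule while_rule[where P = "\<lambda>L. \<exists>Z. dfs_inv L Z" and r = "measure (\<lambda>L. card (comp P r - set L))"])
  fix L assume "\<exists>Z. dfs_inv L Z" and unfinished: "\<not> comp P r \<subseteq> set L"
  then obtain Z where "dfs_inv L Z"
    by blast
  then obtain u Z' where u: "u \<in> comp P r - set L" "dfs_step P L = L @ [u]" and "dfs_inv (L @ [u]) Z'"
    using dfs_inv_step unfinished by blast
  then show "\<exists>Z. dfs_inv (dfs_step P L) Z"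
    by auto
  have "comp P r - set (L @ [u]) \<subset> comp P r - set L"
    using u(1) by auto
  then show "(dfs_step P L, L) \<in> measure (\<lambda>L. card (comp P r - set L))"
    using u(2) finite_comp[OF robot] by (simp add: psubset_card_mono)
next
  fix L assume "\<exists>Z. dfs_inv L Z" and "\<not> \<not> comp P r \<subseteq> set L"
  then obtain Z where inv: "dfs_inv L Z" and "set L = comp P r"
    by (auto simp: dfs_inv_def)
  moreover have "0 \<le> path_cost c (filter (\<lambda>x. x \<in> Z) L)"
    using inv comp_subset[OF robot] by (intro path_cost_nonneg[OF metric]) (auto simp: dfs_inv_def)
  ultimately show "set L = comp P r \<and> hd L = r \<and> distinct L \<and>
      path_cost c L \<le> 2 * tree_weight c P (comp P r)"
    by (auto simp: dfs_inv_def)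
qed (use dfs_inv_init in auto)

end

section \<open>Sensitivity intervals\<close>

lemma ereal_le_diff_diff: "(x :: ereal) \<le> ereal a - (ereal a - x)"
  by (cases x) auto

definition in_sensitivity_intervals ::
    "('v set \<Rightarrow> real) \<Rightarrow> 'v set set \<Rightarrow> ('v \<times> 'v) list \<Rightarrow> ('v set \<Rightarrow> real) \<Rightarrow> bool" where
  "in_sensitivity_intervals ce E P c' \<longleftrightarrow>
     (\<forall>e\<in>E. ereal (ce e) - delta_low ce E P e < ereal (c' e) \<and>
       ereal (c' e) \<le> ereal (ce e) + delta_up ce E P e)"

lemma delta_low_bound:
  assumes "k \<in> Bset P e" "e \<in> set (wedges P) \<Longrightarrow> k \<noteq> wround P e"
  shows "ereal (ce (wk P k)) + delta_up ce E P (wk P k) \<le> ereal (ce e) - delta_low ce E P e"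
proof -
  let ?G = "\<lambda>j. ereal (ce (wk P j)) + delta_up ce E P (wk P j)"
  define S where "S = (if e \<in> set (wedges P) then Bset P e - {wround P e} else Bset P e)"
  have "k \<in> S"
    using assms by (simp add: S_def)
  have "delta_low ce E P e = ereal (ce e) - (SUP j\<in>S. ?G j)"
  proof (cases "e \<in> set (wedges P)")
    case True
    with \<open>k \<in> S\<close> have "Bset P e - {wround P e} \<noteq> {}"
      by (auto simp: S_def)
    with True show ?thesis
      by (simp add: delta_low_def S_def Let_def)
  qed (simp add: delta_low_def S_def)
  have "?G k \<le> (SUP j\<in>S. ?G j)"
    using \<open>k \<in> S\<close> by (rule SUP_upper)
  also have "\<dots> \<le> ereal (ce e) - delta_low ce E P e"
    unfolding \<open>delta_low ce E P e = _\<close> by (rule ereal_le_diff_diff)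
  finally show ?thesis .
qed

lemma Suc_in_Bset: "anum P s \<le> k \<Longrightarrow> k < anum P t \<Longrightarrow> Suc k \<in> Bset P {s, t}"
  by (auto simp: Bset_def)

lemma wedges_nth_eq_if_wround:
  assumes "e \<in> set (wedges P)" "wround P e = Suc k"
  shows "wedges P ! k = e"
  using assms LeastI_ex[of "\<lambda>j. wedges P ! j = e"] by (auto simp: wround_def in_set_conv_nth)

section \<open>Approximation and robustness of Assign\<close>

definition plan_edges :: "'v set \<Rightarrow> ('v \<Rightarrow> 'v list) \<Rightarrow> 'v set set" where
  "plan_edges R Pl = (\<lambda>(r, i). {Pl r ! i, Pl r ! Suc i}) ` (SIGMA r:R. {..<length (Pl r) - 1})"

lemma plan_edgesE:
  assumes "is_plan R T Pl" "e \<in> plan_edges R Pl"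
  obtains x y where "e = {x, y}" "x \<in> R \<union> T" "y \<in> R \<union> T"
proof -
  obtain r i where "r \<in> R" "i < length (Pl r) - 1" "e = {Pl r ! i, Pl r ! Suc i}"
    using assms(2) unfolding plan_edges_def by blast
  moreover from this have "set (Pl r) \<subseteq> R \<union> T" "Pl r ! i \<in> set (Pl r)" "Pl r ! Suc i \<in> set (Pl r)"
    using assms(1) by (auto simp: is_plan_def intro!: nth_mem)
  ultimately show ?thesis
    using that by blast
qed

lemma plan_edges_weight_le:
  assumes "finite R" "metric_cost V c" "\<And>r. r \<in> R \<Longrightarrow> set (Pl r) \<subseteq> V"
  shows "sum (ecost c) (plan_edges R Pl) \<le> plan_cost c R Pl"
proof -
  let ?I = "SIGMA r:R. {..<length (Pl r) - 1}"
  have in_V: "Pl r ! i \<in> V" "Pl r ! Suc i \<in> V" if "r \<in> R" "i < length (Pl r) - 1" for r i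
    using that assms(3)[OF that(1)] nth_mem[of i "Pl r"] nth_mem[of "Suc i" "Pl r"] by auto
  have ecost: "ecost c {Pl r ! i, Pl r ! Suc i} = c (Pl r ! i) (Pl r ! Suc i)"
    if "r \<in> R" "i < length (Pl r) - 1" for r i
    by (rule ecost_doubleton[OF assms(2) in_V[OF that]])
  have "sum (ecost c) (plan_edges R Pl) \<le> sum (ecost c \<circ> (\<lambda>(r, i). {Pl r ! i, Pl r ! Suc i})) ?I"
    unfolding plan_edges_def using assms(1) ecost metric_nonneg[OF assms(2) in_V]
    by (intro sum_image_le) auto
  also have "\<dots> = (\<Sum>(r, i)\<in>?I. c (Pl r ! i) (Pl r ! Suc i))"
    using ecost by (intro sum.cong) auto
  also have "\<dots> = (\<Sum>r\<in>R. \<Sum>i<length (Pl r) - 1. c (Pl r ! i) (Pl r ! Suc i))"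
    using assms(1) by (subst sum.Sigma) auto
  also have "\<dots> = plan_cost c R Pl"
    by (simp add: plan_cost_def path_cost_conv_sum)
  finally show ?thesis .
qed

lemma plan_edges_connect:
  assumes "is_plan R T Pl" "t \<in> T"
  shows "\<exists>r\<in>R. (t, r) \<in> (edge_rel (plan_edges R Pl))\<^sup>*"
proof -
  obtain r where r: "r \<in> R" "t \<in> set (Pl r)"
    using assms unfolding is_plan_def by blast
  have route: "Pl r \<noteq> []" "hd (Pl r) = r"
    using assms(1) r(1) unfolding is_plan_def by blast+
  have "(Pl r ! i, Pl r ! 0) \<in> (edge_rel (plan_edges R Pl))\<^sup>*" if "i < length (Pl r)" for i
    using that
  proof (induction i)
    case (Suc i)
    then have "{Pl r ! i, Pl r ! Suc i} \<in> plan_edges R Pl"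
      using r(1) unfolding plan_edges_def by (intro image_eqI[of _ _ "(r, i)"]) auto
    then have "(Pl r ! Suc i, Pl r ! i) \<in> edge_rel (plan_edges R Pl)"
      by (simp add: edge_rel_def insert_commute)
    with Suc show ?case
      by (meson Suc_lessD converse_rtrancl_into_rtrancl)
  qed simp
  with r route show ?thesis
    by (metis hd_conv_nth in_set_conv_nth)
qed

locale mrta =
  fixes R T :: "'v set" and c :: "'v \<Rightarrow> 'v \<Rightarrow> real"
  assumes finite_R: "finite R" and finite_T: "finite T" and disjoint: "R \<inter> T = {}"
    and nonempty_R: "R \<noteq> {}"
    and metric: "metric_cost (R \<union> T) c" and injective: "inj_on (ecost c) (edges R T)"
begin

lemma candidate_edge:
  assumes "X \<subseteq> T" "s \<in> R \<union> X" "t \<in> T - X"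
  shows "{s, t} \<in> edges R T"
proof -
  have "s \<noteq> t"
    using candidate_ne[OF assms(2,3) disjoint] .
  moreover have "{s, t} \<subseteq> R \<union> T"
    using assms by blast
  ultimately show ?thesis
    by (simp add: edges_def)
qed

lemma auction_run_auction: "auction_run R T (ecost c) (auction R T c)"
proof -
  obtain P where P: "auction_run R T (ecost c) P"
    using auction_run_exists finite_R finite_T nonempty_R by blast
  interpret auction_forest R T "ecost c" P
    using P finite_T disjoint by unfold_locales
  have "P' = P" if "auction_run R T (ecost c) P'" for P'
  proof (rule run_eq_if_strict_winners[OF that])
    fix k s t assume k: "k < length P" and s: "s \<in> R \<union> assigned P k" and t: "t \<in> T - assigned P k"
      and ne: "{s, t} \<noteq> wedges P ! k"
    have "{s, t} \<in> edges R T"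
      by (rule candidate_edge[OF assigned_subset s t])
    moreover have "wedges P ! k \<in> edges R T"
      unfolding wedges_nth[OF k] by (rule candidate_edge[OF assigned_subset winner(1,2)[OF k]])
    ultimately have "ecost c (wedges P ! k) \<noteq> ecost c {s, t}"
      using inj_onD[OF injective] ne by metis
    moreover have "ecost c (wedges P ! k) \<le> ecost c {s, t}"
      using winner(3)[OF k] s t by blast
    ultimately show "ecost c (wedges P ! k) < ecost c {s, t}"
      by simp
  qed
  with P have "auction R T c = P"
    unfolding auction_def by (rule the_equality)
  with P show ?thesis
    by simp
qed

end

sublocale mrta \<subseteq> auction_forest R T "ecost c" "auction R T c"
  using auction_run_auction finite_T disjoint by unfold_locales

context mrta
begin

lemma assign_tour:
  assumes "r \<in> R"
  shows "set (assign R T c r) = comp (auction R T c) r" "hd (assign R T c r) = r"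
    "distinct (assign R T c r)"
    "path_cost c (assign R T c r) \<le> 2 * tree_weight c (auction R T c) (comp (auction R T c) r)"
proof -
  interpret shortcut_tour R T "ecost c" "auction R T c" c r
    using assms metric by unfold_locales
  show "set (assign R T c r) = comp (auction R T c) r" "hd (assign R T c r) = r"
    "distinct (assign R T c r)"
    "path_cost c (assign R T c r) \<le> 2 * tree_weight c (auction R T c) (comp (auction R T c) r)"
    using dfshortcut_tour by (simp_all add: assign_def)
qed

lemma assign_route:
  assumes "r \<in> R"
  shows "assign R T c r \<noteq> []" "set (tl (assign R T c r)) \<subseteq> T"
proof -
  let ?L = "assign R T c r"
  show "?L \<noteq> []"
    using assign_tour(1)[OF assms] self_in_comp[of r "auction R T c"] by auto
  then have "?L = r # tl ?L"
    using assign_tour(2)[OF assms] by (metis list.collapse)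
  then have "r \<notin> set (tl ?L)" "set (tl ?L) \<subseteq> comp (auction R T c) r"
    using assign_tour(1,3)[OF assms] by (metis distinct.simps(2), metis set_subset_Cons)
  then show "set (tl ?L) \<subseteq> T"
    using comp_subset[OF assms] comp_Int_R[OF assms] by (auto dest!: subsetD)
qed

lemma assign_is_plan: "is_plan R T (assign R T c)"
proof -
  have "(\<Union>r\<in>R. set (assign R T c r)) = (\<Union>r\<in>R. comp (auction R T c) r)"
    by (rule SUP_cong) (simp_all add: assign_tour(1))
  then show ?thesis
    unfolding is_plan_def UN_comp
    using assign_route assign_tour(1,2) comp_disjoint by simp
qed

lemma sum_tree_weight_le:
  "(\<Sum>r\<in>R. tree_weight c (auction R T c) (comp (auction R T c) r))
    \<le> sum_list (map (ecost c) (wedges (auction R T c)))"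
proof -
  let ?P = "auction R T c"
  let ?K = "\<lambda>r. {k. k < length ?P \<and> wedges ?P ! k \<subseteq> comp ?P r}"
  have "?K r \<inter> ?K r' = {}" if "r \<in> R" "r' \<in> R" "r \<noteq> r'" for r r'
    using comp_disjoint[OF that] by (auto simp: wedges_nth)
  then have "(\<Sum>r\<in>R. tree_weight c ?P (comp ?P r)) = sum (\<lambda>k. ecost c (wedges ?P ! k)) (\<Union>r\<in>R. ?K r)"
    unfolding tree_weight_def using finite_R by (intro sum.UNION_disjoint[symmetric]) auto
  also have "\<dots> \<le> sum (\<lambda>k. ecost c (wedges ?P ! k)) {..<length ?P}"
    using ecost_wedge_nonneg[OF metric] by (intro sum_mono2) auto
  also have "\<dots> = sum_list (map (ecost c) (wedges ?P))"
    by (simp add: sum_list_sum_nth atLeast0LessThan)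
  finally show ?thesis .
qed

lemma assign_cost_le:
  assumes "is_plan R T Pl"
  shows "plan_cost c R (assign R T c) \<le> 2 * plan_cost c R Pl"
proof -
  let ?P = "auction R T c"
  have "plan_cost c R (assign R T c) \<le> (\<Sum>r\<in>R. 2 * tree_weight c ?P (comp ?P r))"
    unfolding plan_cost_def using assign_tour(4) by (rule sum_mono)
  also have "\<dots> \<le> 2 * sum_list (map (ecost c) (wedges ?P))"
    using sum_tree_weight_le by (simp add: sum_distrib_left[symmetric])
  also have "sum_list (map (ecost c) (wedges ?P)) \<le> sum (ecost c) (plan_edges R Pl)"
  proof (rule auction_weight_le_connecting[OF auction_run_auction finite_T disjoint])
    show "finite (plan_edges R Pl)"
      using finite_R by (simp add: plan_edges_def)
    fix e assume "e \<in> plan_edges R Pl"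
    then obtain x y where "e = {x, y}" "x \<in> R \<union> T" "y \<in> R \<union> T"
      by (rule plan_edgesE[OF assms])
    then show "e \<subseteq> R \<union> T \<and> 0 \<le> ecost c e"
      by (simp add: ecost_doubleton[OF metric] metric_nonneg[OF metric])
  qed (rule plan_edges_connect[OF assms])
  also have "sum (ecost c) (plan_edges R Pl) \<le> plan_cost c R Pl"
    using assms finite_R metric by (intro plan_edges_weight_le) (auto simp: is_plan_def)
  finally show ?thesis
    by simp
qed

lemma perturbed_winner_strict:
  assumes c': "in_sensitivity_intervals (ecost c) (edges R T) (auction R T c) c'"
    and k: "k < length (auction R T c)"
    and s: "s \<in> R \<union> assigned (auction R T c) k" and t: "t \<in> T - assigned (auction R T c) k"
    and ne: "{s, t} \<noteq> wedges (auction R T c) ! k"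
  shows "c' (wedges (auction R T c) ! k) < c' {s, t}"
proof -
  let ?P = "auction R T c" and ?E = "edges R T"
  have e: "{s, t} \<in> ?E"
    by (rule candidate_edge[OF assigned_subset s t])
  have w: "wedges ?P ! k \<in> ?E"
    unfolding wedges_nth[OF k] by (rule candidate_edge[OF assigned_subset winner(1,2)[OF k]])
  have "Suc k \<in> Bset ?P {s, t}"
    using anum_le_if_reached[OF s] anum_gt_if_unreached[OF t] by (rule Suc_in_Bset)
  moreover have "Suc k \<noteq> wround ?P {s, t}" if "{s, t} \<in> set (wedges ?P)"
    using wedges_nth_eq_if_wround[OF that] ne by metis
  ultimately have bound: "ereal (ecost c (wk ?P (Suc k))) + delta_up (ecost c) ?E ?P (wk ?P (Suc k))
      \<le> ereal (ecost c {s, t}) - delta_low (ecost c) ?E ?P {s, t}"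
    by (rule delta_low_bound)
  have "ereal (c' (wedges ?P ! k))
      \<le> ereal (ecost c (wedges ?P ! k)) + delta_up (ecost c) ?E ?P (wedges ?P ! k)"
    using c' w by (simp add: in_sensitivity_intervals_def)
  also have "\<dots> \<le> ereal (ecost c {s, t}) - delta_low (ecost c) ?E ?P {s, t}"
    using bound by (simp add: wk_def)
  also have "\<dots> < ereal (c' {s, t})"
    using c' e by (simp add: in_sensitivity_intervals_def)
  finally show ?thesis
    by simp
qed

lemma perturbed_auction_run_eq:
  assumes "in_sensitivity_intervals (ecost c) (edges R T) (auction R T c) c'"
    and "auction_run R T c' P'"
  shows "P' = auction R T c"
  using assms(2) by (rule run_eq_if_strict_winners) (rule perturbed_winner_strict[OF assms(1)])

end

theorem corollary13:
  fixes R T :: "'v set" and c :: "'v \<Rightarrow> 'v \<Rightarrow> real"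
  assumes "mrta_instance R T"
    and "metric_cost (R \<union> T) c"
    and "inj_on (ecost c) (edges R T)"
  shows "(is_plan R T (assign R T c) \<and>
         (\<forall>Pl. is_plan R T Pl \<longrightarrow> plan_cost c R (assign R T c) \<le> 2 * plan_cost c R Pl)) \<and>
         (\<forall>c' :: 'v set \<Rightarrow> real.
           (\<forall>e\<in>edges R T.
              ereal (ecost c e) - delta_low (ecost c) (edges R T) (auction R T c) e < ereal (c' e) \<and>
              ereal (c' e) \<le> ereal (ecost c e) + delta_up (ecost c) (edges R T) (auction R T c) e)
           \<longrightarrow> (\<forall>P'. auction_run R T c' P' \<longrightarrow>
                  wedges P' = wedges (auction R T c) \<and>
                  (\<forall>r\<in>R. dfshortcut P' r = assign R T c r)))"
proof -
  interpret mrta R T c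
    using assms by unfold_locales (auto simp: mrta_instance_def)
  show ?thesis
    using assign_is_plan assign_cost_le perturbed_auction_run_eq
    by (auto simp: in_sensitivity_intervals_def assign_def)
qed

end
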